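(* Let $b(x)=\frac{x-i}{x+i}$, $\Lambda=\operatorname{diag}(b,b^{-1})$, $\Lambda^+=\operatorname{diag}(b,1)$, $\Lambda^-=\operatorname{diag}(1,b^{-1})$, and for real $\varepsilon$ let $$G_\varepsilon(x)=\begin{pmatrix}\frac{x^2+xi(-18+8e^{i\varepsilon x}+8e^{-i\varepsilon x})-1}{x^2+1}&\frac{xi(24-12e^{i\varepsilon x}-12e^{-i\varepsilon x})}{x^2+1}\\[1mm] \frac{xi(-12+4e^{i\varepsilon x}+8e^{-i\varepsilon x})}{x^2+1}&\frac{x^2+xi(18-8e^{i\varepsilon x}-8e^{-i\varepsilon x})-1}{x^2+1}\end{pmatrix},$$ so that $G_0=\Lambda$. Then for each $\varepsilon\in(0,1]$ there exist $2\times2$ matrix functions $N^\pm_\varepsilon$, continuous and bounded on $\overline{\Pi^\pm}$ and analytic in $\Pi^\pm$, such that $\Lambda^+(x)N^+_\varepsilon(x)+N^-_\varepsilon(x)\Lambda^-(x)=G_\varepsilon(x)-\Lambda(x)$ for all $x\in\mathbb{R}$ and $\sup_{\overline{\Pi^\pm}}|N^\pm_\varepsilon|=O(\varepsilon)$ as $\varepsilon\to0$. Consequently $\sup_{x\in\mathbb{R}}\big\|G_\varepsilon(x)-\big(I+N^-_\varepsilon(\Lambda^+)^{-1}\big)\Lambda\big(I+(\Lambda^-)^{-1}N^+_\varepsilon\big)\big\|=O(\varepsilon^2)$, and for small $\varepsilon$ the two outer factors are invertible with bounded inverses on $\overline{\Pi^-}$, $\overline{\Pi^+}$ respectively, so this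 product is a factorization with partial indices $1,-1$.
   Context: $\Pi^+=\{\operatorname{Im}z>0\}$, $\Pi^-=\{\operatorname{Im}z<0\}$; $I$ is the $2\times2$ identity matrix. The matrix $\Lambda$ has a right factorization with trivial factors $G_0^\pm=I$ and partial indices $\varkappa_1=1$, $\varkappa_2=-1$. *)

theory Defs
  imports "HOL-Analysis.Analysis"
begin

definition mat2 :: "complex \<Rightarrow> complex \<Rightarrow> complex \<Rightarrow> complex \<Rightarrow> complex^2^2" where
  "mat2 a b c d = (\<chi> i j. if i = 1 then (if j = 1 then a else b) else (if j = 1 then c else d))"

definition bfun :: "complex \<Rightarrow> complex" where
  "bfun z = (z - \<i>) / (z + \<i>)"

definition Lambda :: "complex \<Rightarrow> complex^2^2" where
  "Lambda z = mat2 (bfun z) 0 0 (inverse (bfun z))"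

definition Lambda_plus :: "complex \<Rightarrow> complex^2^2" where
  "Lambda_plus z = mat2 (bfun z) 0 0 1"

definition Lambda_minus :: "complex \<Rightarrow> complex^2^2" where
  "Lambda_minus z = mat2 1 0 0 (inverse (bfun z))"

definition Lambda_plus_inv :: "complex \<Rightarrow> complex^2^2" where
  "Lambda_plus_inv z = mat2 (inverse (bfun z)) 0 0 1"

definition Lambda_minus_inv :: "complex \<Rightarrow> complex^2^2" where
  "Lambda_minus_inv z = mat2 1 0 0 (bfun z)"

definition Gmat :: "real \<Rightarrow> real \<Rightarrow> complex^2^2" where
  "Gmat \<epsilon> x = (let z = complex_of_real x;
                  ep = exp (\<i> * complex_of_real (\<epsilon> * x));
                  em = exp (- \<i> * complex_of_real (\<epsilon> * x)) in
     mat2 ((z^2 + z * \<i> * (-18 + 8 * ep + 8 * em) - 1) / (z^2 + 1))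
          ((z * \<i> * (24 - 12 * ep - 12 * em)) / (z^2 + 1))
          ((z * \<i> * (-12 + 4 * ep + 8 * em)) / (z^2 + 1))
          ((z^2 + z * \<i> * (18 - 8 * ep - 8 * em) - 1) / (z^2 + 1)))"

definition good_on :: "complex set \<Rightarrow> (complex \<Rightarrow> complex^2^2) \<Rightarrow> bool" where
  "good_on S N \<longleftrightarrow> continuous_on (closure S) N \<and> bounded (N ` closure S) \<and>
     (\<forall>i j. (\<lambda>z. N z $ i $ j) holomorphic_on S)"

abbreviation Pi_plus :: "complex set" where "Pi_plus \<equiv> {z. Im z > 0}"
abbreviation Pi_minus :: "complex set" where "Pi_minus \<equiv> {z. Im z < 0}"

end

theory Submission
  imports Defs "HOL-Complex_Analysis.Complex_Analysis"
begin

text \<open>Each entry of \<open>G\<^sub>\<epsilon> - \<Lambda>\<close> is a combination of \<open>x\<i> (exp (\<plusminus>\<i>\<epsilon>x) - 1) / (x\<^sup>2 + 1)\<close>.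
  The second-order expansion
  \<open>exp (\<i>\<epsilon>z) = exp (-\<epsilon>) + \<i>\<epsilon> exp (-\<epsilon>) (z - \<i>) + Q\<^sub>\<epsilon>(z) (z - \<i>)\<^sup>2\<close> at \<open>z = \<i>\<close>
  splits it into a part analytic and bounded in the upper half-plane and one in the lower
  half-plane, the double zero at \<open>\<i>\<close> absorbing the divisions by \<open>b\<close>. The resulting \<open>N\<^sup>\<plusminus>\<close>
  are explicit in \<open>zQ\<^sub>\<epsilon>(z)\<close>, \<open>exp (-\<epsilon>) - 1\<close> and \<open>\<i>\<epsilon> exp (-\<epsilon>)\<close>, all of size \<open>O(\<epsilon>)\<close>
  (for \<open>zQ\<^sub>\<epsilon>\<close> by the maximum modulus principle near \<open>\<i>\<close>). Multiplying out, the factorization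
  error is exactly \<open>-N\<^sup>-N\<^sup>+ = O(\<epsilon>\<^sup>2)\<close>, and the outer factors are \<open>I + O(\<epsilon>)\<close>, hence
  invertible with bounded inverses.\<close>

unbundle no Formal_Power_Series.fps_syntax  \<comment> \<open>frees \<open>$\<close> for vector indexing\<close>

lemma norm_diff_mono: "norm a \<le> r \<Longrightarrow> norm b \<le> s \<Longrightarrow> norm (a - b) \<le> r + s"
  using norm_triangle_mono[of a r "- b" s] by simp

lemma norm_le_sum_norm_nth:
  fixes x :: "'a::real_normed_vector^'n"
  shows "norm x \<le> (\<Sum>i\<in>UNIV. norm (x $ i))"
  unfolding norm_vec_def by (rule L2_set_le_sum) simp

lemma norm_matrix_le_sum_entries:
  fixes A :: "'a::real_normed_vector^'n^'m"
  shows "norm A \<le> (\<Sum>i\<in>UNIV. \<Sum>j\<in>UNIV. norm (A $ i $ j))"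
proof -
  have "norm A \<le> (\<Sum>i\<in>UNIV. norm (A $ i))" by (rule norm_le_sum_norm_nth)
  also have "\<dots> \<le> (\<Sum>i\<in>UNIV. \<Sum>j\<in>UNIV. norm (A $ i $ j))"
    by (intro sum_mono norm_le_sum_norm_nth)
  finally show ?thesis .
qed

lemma norm_matrix_entry_le:
  fixes A :: "'a::real_normed_vector^'n^'m"
  shows "norm (A $ i $ j) \<le> norm A"
  by (rule order_trans[OF Finite_Cartesian_Product.norm_nth_le Finite_Cartesian_Product.norm_nth_le])

lemma norm_matrix_mult_le:
  fixes A :: "'a::real_normed_algebra_1^'n^'m" and B :: "'a^'k^'n"
  shows "norm (A ** B) \<le> CARD('m) * CARD('n) * CARD('k) * norm A * norm B"
proof -
  have entry: "norm ((A ** B) $ i $ j :: 'a) \<le> CARD('n) * (norm A * norm B)" for i j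
  proof -
    have "norm ((A ** B) $ i $ j) \<le> (\<Sum>l\<in>UNIV. norm (A $ i $ l * B $ l $ j))"
      unfolding matrix_matrix_mult_def by (simp add: norm_sum)
    also have "\<dots> \<le> (\<Sum>l\<in>(UNIV::'n set). norm A * norm B)"
      by (intro sum_mono order_trans[OF norm_mult_ineq] mult_mono norm_matrix_entry_le) auto
    finally show ?thesis by simp
  qed
  have "norm (A ** B) \<le> (\<Sum>i\<in>(UNIV::'m set). \<Sum>j\<in>(UNIV::'k set). CARD('n) * (norm A * norm B))"
    by (rule order_trans[OF norm_matrix_le_sum_entries]) (intro sum_mono entry)
  then show ?thesis by (simp add: algebra_simps)
qed

lemma matrix_mul_rdistrib: "((A::'a::semiring_1^'n^'m) + B) ** C = A ** C + B ** C"
  by (simp add: matrix_matrix_mult_def vec_eq_iff distrib_right sum.distrib)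

lemma matrix_mul_matrix_inv:
  assumes "invertible A" shows "A ** matrix_inv A = mat 1"
  using assms unfolding invertible_def matrix_inv_def by (rule someI2_ex) auto

lemma norm_matrix_inv_one_plus_le:
  fixes X :: "'a::real_normed_algebra_1^'n^'n"
  assumes "invertible (mat 1 + X)" and small: "2 * CARD('n)^3 * norm X \<le> 1"
  shows "norm (matrix_inv (mat 1 + X)) \<le> 2 * norm (mat 1 :: 'a^'n^'n)"
proof -
  define Y where "Y = matrix_inv (mat 1 + X)"
  have "Y + X ** Y = mat 1"
    using matrix_mul_matrix_inv[OF assms(1)] by (simp add: Y_def matrix_mul_rdistrib)
  then have "Y = mat 1 - X ** Y" by (simp add: eq_diff_eq)
  then have "norm Y \<le> norm (mat 1 :: 'a^'n^'n) + norm (X ** Y)"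
    by (metis norm_triangle_ineq4)
  also have "norm (X ** Y) \<le> CARD('n)^3 * norm X * norm Y"
    using norm_matrix_mult_le[of X Y] by (simp add: power3_eq_cube)
  also have "\<dots> \<le> norm Y / 2"
    using mult_right_mono[OF small norm_ge_zero[of Y]] by simp
  finally show ?thesis by (simp add: Y_def)
qed

lemma factorization_defect:
  fixes L Lp Lm Lpi Lmi Np Nm G :: "'a::comm_ring_1^'n^'n"
  assumes "Lpi ** L = Lm" "L ** Lmi = Lp" "Lm ** Lmi = mat 1"
    and "Lp ** Np + Nm ** Lm = G - L"
  shows "G - (mat 1 + Nm ** Lpi) ** L ** (mat 1 + Lmi ** Np) = - (Nm ** Np)"
proof -
  have "(mat 1 + Nm ** Lpi) ** L ** (mat 1 + Lmi ** Np)
      = (L + Nm ** Lm) ** (mat 1 + Lmi ** Np)"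
    using assms(1) by (simp add: matrix_mul_rdistrib flip: matrix_mul_assoc)
  also have "\<dots> = L + (Lp ** Np + Nm ** Lm) + Nm ** Np"
    using assms(2,3)
    by (simp add: matrix_mul_rdistrib matrix_add_ldistrib matrix_mul_assoc algebra_simps)
       (metis matrix_mul_assoc matrix_mul_lid)
  finally show ?thesis using assms(4) by simp
qed

lemma mat2_nth [simp]:
  "mat2 a b c d $ 1 $ 1 = a" "mat2 a b c d $ 1 $ 2 = b"
  "mat2 a b c d $ 2 $ 1 = c" "mat2 a b c d $ 2 $ 2 = d"
  by (simp_all add: mat2_def)

lemma mat2_eqI:
  "A $ 1 $ 1 = a \<Longrightarrow> A $ 1 $ 2 = b \<Longrightarrow> A $ 2 $ 1 = c \<Longrightarrow> A $ 2 $ 2 = d \<Longrightarrow> A = mat2 a b c d"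
  by (simp add: vec_eq_iff forall_2)

lemma mat2_mult:
  "mat2 a b c d ** mat2 p q r w = mat2 (a*p + b*r) (a*q + b*w) (c*p + d*r) (c*q + d*w)"
  by (rule mat2_eqI) (simp_all add: matrix_matrix_mult_def sum_2)

lemma mat2_add: "mat2 a b c d + mat2 p q r w = mat2 (a+p) (b+q) (c+r) (d+w)"
  by (rule mat2_eqI) simp_all

lemma mat2_diff: "mat2 a b c d - mat2 p q r w = mat2 (a-p) (b-q) (c-r) (d-w)"
  by (rule mat2_eqI) simp_all

lemma mat_1_eq_mat2: "mat 1 = mat2 1 0 0 1"
  by (rule mat2_eqI) (simp_all add: mat_def)

lemma norm_mat2_le: "norm (mat2 a b c d) \<le> norm a + norm b + norm c + norm d"
  using norm_matrix_le_sum_entries[of "mat2 a b c d"] by (simp add: sum_2)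

lemma continuous_on_mat2:
  assumes "continuous_on S a" "continuous_on S b" "continuous_on S c" "continuous_on S d"
  shows "continuous_on S (\<lambda>z. mat2 (a z) (b z) (c z) (d z))"
  unfolding mat2_def
proof (intro continuous_on_vec_lambda)
  fix i j :: 2
  show "continuous_on S (\<lambda>z. if i = 1 then if j = 1 then a z else b z else if j = 1 then c z else d z)"
    using assms by (cases "i = 1"; cases "j = 1") simp_all
qed

lemma holomorphic_on_mat2_nth:
  assumes "a holomorphic_on S" "b holomorphic_on S" "c holomorphic_on S" "d holomorphic_on S"
  shows "(\<lambda>z. mat2 (a z) (b z) (c z) (d z) $ i $ j) holomorphic_on S"
  using assms exhaust_2[of i] exhaust_2[of j] by auto

lemma good_onI_mat2:
  assumes "continuous_on (closure S) a" "continuous_on (closure S) b"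
    "continuous_on (closure S) c" "continuous_on (closure S) d"
    and "a holomorphic_on S" "b holomorphic_on S" "c holomorphic_on S" "d holomorphic_on S"
    and "\<And>z. z \<in> closure S \<Longrightarrow> norm (mat2 (a z) (b z) (c z) (d z)) \<le> B"
  shows "good_on S (\<lambda>z. mat2 (a z) (b z) (c z) (d z))"
  unfolding good_on_def bounded_iff
  using assms by (auto intro!: continuous_on_mat2 holomorphic_on_mat2_nth)

lemma invertible_mat_1_plus_small:
  fixes X :: "complex^2^2"
  assumes small: "16 * norm X \<le> 1"
  shows "invertible (mat 1 + X) \<and> norm (matrix_inv (mat 1 + X)) \<le> 2 * norm (mat 1 :: complex^2^2)"
proof -
  have X: "norm (X $ i $ j) \<le> 1/16" for i j
    using norm_matrix_entry_le[of X i j] small by linarith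
  have XX: "norm (X $ i $ j * X $ k $ l) \<le> 1/16 * (1/16)" for i j k l
    unfolding norm_mult using X[of i j] X[of k l] by (rule mult_mono) auto
  have "norm (X$1$1 + X$2$2 + X$1$1 * X$2$2 - X$1$2 * X$2$1) \<le> 1/16 + 1/16 + 1/16 * (1/16) + 1/16 * (1/16)"
    by (intro norm_triangle_mono norm_diff_mono X XX)
  then have "norm (X$1$1 + X$2$2 + X$1$1 * X$2$2 - X$1$2 * X$2$1) < 1" by simp
  moreover have "det (mat 1 + X) = 1 + (X$1$1 + X$2$2 + X$1$1 * X$2$2 - X$1$2 * X$2$1)"
    by (simp add: det_2 mat_def algebra_simps)
  ultimately have "det (mat 1 + X) \<noteq> 0"
    by (metis add.inverse_unique norm_minus_cancel norm_one order.irrefl)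
  then have "invertible (mat 1 + X)" by (simp add: invertible_det_nz)
  with norm_matrix_inv_one_plus_le[of X] small show ?thesis by simp
qed

definition divided_diff :: "(complex \<Rightarrow> complex) \<Rightarrow> complex \<Rightarrow> complex \<Rightarrow> complex" where
  "divided_diff f a z = (if z = a then deriv f a else (f z - f a) / (z - a))"

lemma holomorphic_divided_diff:
  "f holomorphic_on S \<Longrightarrow> open S \<Longrightarrow> divided_diff f a holomorphic_on S"
  unfolding divided_diff_def[abs_def] by (rule pole_lemma_open)

lemma norm_exp_minus_one_le:
  assumes "Re w \<le> 0" shows "norm (exp w - 1) \<le> norm w"
proof -
  have "norm (exp w - exp 0) \<le> 1 * norm (w - 0)"
  proof (rule field_differentiable_bound[where S="{w. Re w \<le> 0}" and f'=exp])
    show "(exp has_field_derivative exp z) (at z within {w. Re w \<le> 0})" for z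
      by (auto intro!: derivative_eq_intros)
  qed (use assms convex_halfspace_Re_le in auto)
  then show ?thesis by simp
qed

text \<open>The \<open>Q\<^sub>\<epsilon>\<close> of the expansion at \<open>\<i>\<close>, as a nested divided difference.\<close>
definition exp_remainder :: "real \<Rightarrow> complex \<Rightarrow> complex" where
  "exp_remainder e = divided_diff (divided_diff (\<lambda>z. exp (\<i> * of_real e * z)) \<i>) \<i>"

lemma holomorphic_exp_remainder: "exp_remainder e holomorphic_on UNIV"
  unfolding exp_remainder_def by (intro holomorphic_divided_diff holomorphic_intros) auto

lemma holomorphic_on_exp_remainder_compose [holomorphic_intros]:
  "f holomorphic_on S \<Longrightarrow> (\<lambda>z. exp_remainder e (f z)) holomorphic_on S"
  using holomorphic_on_compose[of f S "exp_remainder e"]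
    holomorphic_on_subset[OF holomorphic_exp_remainder subset_UNIV] by (simp add: o_def)

lemma continuous_on_exp_remainder_compose [continuous_intros]:
  "continuous_on S f \<Longrightarrow> continuous_on S (\<lambda>z. exp_remainder e (f z))"
  using continuous_on_compose2[OF holomorphic_on_imp_continuous_on[OF holomorphic_exp_remainder]]
  by blast

lemma exp_second_order_expansion:
  assumes "z \<noteq> \<i>"
  shows "exp (\<i> * of_real e * z)
    = exp (- of_real e) + \<i> * of_real e * exp (- of_real e) * (z - \<i>) + exp_remainder e z * (z - \<i>)^2"
proof -
  define f where "f = (\<lambda>z. exp (\<i> * of_real e * z))"
  have f_i: "f \<i> = exp (- of_real e)"
    by (simp add: f_def mult.commute mult.left_commute)
  have "(f has_field_derivative \<i> * of_real e * f \<i>) (at \<i>)"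
    unfolding f_def by (auto intro!: derivative_eq_intros)
  then have f'_i: "divided_diff f \<i> \<i> = \<i> * of_real e * exp (- of_real e)"
    by (simp add: divided_diff_def DERIV_imp_deriv f_i)
  have cancel: "((u / d - s) / d) * d^2 = u - s * d" if "d \<noteq> 0" for u s d :: complex
    using that by (simp add: field_simps power2_eq_square)
  have "exp_remainder e z = ((f z - f \<i>) / (z - \<i>) - \<i> * of_real e * exp (- of_real e)) / (z - \<i>)"
    using assms f'_i by (simp add: exp_remainder_def divided_diff_def flip: f_def)
  then have "exp_remainder e z * (z - \<i>)^2 = f z - f \<i> - \<i> * of_real e * exp (- of_real e) * (z - \<i>)"
    using assms cancel[of "z - \<i>"] by simp
  then show ?thesis by (simp add: f_i) (simp add: f_def)
qed

lemma norm_exp_constants_le: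
  assumes "0 \<le> e"
  shows "norm (exp (- complex_of_real e) - 1) \<le> e" and "norm (\<i> * of_real e * exp (- complex_of_real e)) \<le> e"
  using norm_exp_minus_one_le[of "- of_real e"] assms by (simp_all add: norm_mult mult_left_le)

lemma norm_exp_remainder_far_le:
  assumes "0 \<le> e" "0 \<le> Im z" "1/2 \<le> norm (z - \<i>)"
  shows "norm (z * exp_remainder e z) \<le> 18 * e"
proof -
  define d where "d = norm (z - \<i>)"
  define a where "a = exp (- complex_of_real e)"
  have d: "1/2 \<le> d" "z \<noteq> \<i>" using assms(3) by (auto simp: d_def)
  have z: "norm z \<le> d + 1"
    unfolding d_def using norm_triangle_ineq[of "z - \<i>" \<i>] by simp
  have E: "norm (exp (\<i> * of_real e * z) - 1) \<le> e * norm z"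
    using norm_exp_minus_one_le[of "\<i> * of_real e * z"] assms(1,2) by (simp add: norm_mult)
  have S: "norm ((\<i> * of_real e * a) * (z - \<i>)) \<le> e * d"
    unfolding norm_mult[of _ "z - \<i>"] d_def a_def
    using norm_exp_constants_le(2)[OF assms(1)] by (rule mult_right_mono) simp
  have "exp_remainder e z * (z - \<i>)^2
      = (exp (\<i> * of_real e * z) - 1) - (a - 1) - (\<i> * of_real e * a) * (z - \<i>)"
    unfolding exp_second_order_expansion[OF d(2)] a_def by simp
  also have "norm \<dots> \<le> e * norm z + e + e * d"
    using norm_exp_constants_le(1)[OF assms(1), folded a_def] by (intro norm_diff_mono E S)
  also have "\<dots> \<le> 6 * e * d"
    using mult_left_mono[OF z assms(1)] mult_right_mono[OF d(1) assms(1)] by (simp add: algebra_simps)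
  finally have "norm (exp_remainder e z) * d * d \<le> 6 * e * d"
    by (simp add: norm_mult norm_power d_def power2_eq_square)
  then have Q: "norm (exp_remainder e z) * d \<le> 6 * e"
    using d(1) by simp
  have "norm (z * exp_remainder e z) \<le> (3 * d) * norm (exp_remainder e z)"
    unfolding norm_mult using z d(1) by (intro mult_right_mono) auto
  also have "\<dots> \<le> 18 * e" using Q by (simp add: mult.commute)
  finally show ?thesis .
qed

text \<open>Near the removable singularity \<open>\<i>\<close> the bound follows from the maximum modulus principle on
  the disc of radius \<open>1/2\<close>, whose boundary lies in the upper half-plane.\<close>
lemma norm_exp_remainder_le:
  assumes "0 \<le> e" "0 \<le> Im z"
  shows "norm (z * exp_remainder e z) \<le> 18 * e"
proof (cases "1/2 \<le> norm (z - \<i>)")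
  case True
  then show ?thesis using norm_exp_remainder_far_le assms by blast
next
  case False
  have hol: "(\<lambda>z. z * exp_remainder e z) holomorphic_on UNIV"
    by (intro holomorphic_intros)
  show ?thesis
  proof (rule maximum_modulus_frontier[where f = "\<lambda>z. z * exp_remainder e z" and S = "ball \<i> (1/2)"])
    show "(\<lambda>z. z * exp_remainder e z) holomorphic_on interior (ball \<i> (1/2))"
      using holomorphic_on_subset[OF hol] by blast
    show "continuous_on (closure (ball \<i> (1/2))) (\<lambda>z. z * exp_remainder e z)"
      using holomorphic_on_imp_continuous_on[OF hol] continuous_on_subset by blast
    show "z \<in> ball \<i> (1/2)" using False by (simp add: dist_norm norm_minus_commute)
  next
    fix w assume "w \<in> frontier (ball \<i> (1/2))"
    then have w: "norm (w - \<i>) = 1/2" by (simp add: dist_norm norm_minus_commute)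
    then have "0 \<le> Im w" using abs_Im_le_cmod[of "w - \<i>"] by simp
    then show "norm (w * exp_remainder e w) \<le> 18 * e"
      using norm_exp_remainder_far_le assms(1) w by simp
  qed auto
qed

lemma norm_Cayley_le_1:
  assumes "0 \<le> Im z"
  shows "norm ((z - \<i>) / (z + \<i>)) \<le> 1" and "norm (1 / (z + \<i>)) \<le> 1"
proof -
  have "1 \<le> norm (z + \<i>)"
    using assms abs_Im_le_cmod[of "z + \<i>"] by simp
  moreover have "norm (z - \<i>) \<le> norm (z + \<i>)"
    unfolding norm_le inner_complex_def using assms by (simp add: algebra_simps)
  ultimately show "norm ((z - \<i>) / (z + \<i>)) \<le> 1" "norm (1 / (z + \<i>)) \<le> 1"
    by (simp_all add: norm_divide divide_le_eq_1)
qed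

lemma norm_Cayley_le_1_lower:
  assumes "Im z \<le> 0"
  shows "norm ((z + \<i>) / (z - \<i>)) \<le> 1" and "norm (1 / (z - \<i>)) \<le> 1"
  using norm_Cayley_le_1[of "- z"] assms
  by (simp_all add: minus_divide_divide norm_divide norm_minus_commute add.commute)

lemma closure_upper_half_plane: "closure {z. 0 < Im z} = {z. 0 \<le> Im z}"
  using closure_halfspace_gt[of \<i> 0] by simp

lemma closure_lower_half_plane: "closure {z. Im z < 0} = {z. Im z \<le> 0}"
  using closure_halfspace_lt[of \<i> 0] by simp

text \<open>\<open>K\<close> and \<open>S\<close> stand for the Taylor coefficients \<open>exp (-\<epsilon>) - 1\<close> and \<open>\<i>\<epsilon> exp (-\<epsilon>)\<close>,
  \<open>P\<close> for \<open>zQ\<^sub>\<epsilon>(z)\<close> and \<open>R\<close> for \<open>zQ\<^sub>\<epsilon>(-z)\<close>; the entries are the upper and lower half-plane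
  parts of the entries of \<open>G\<^sub>\<epsilon> - \<Lambda>\<close>, normalised by additive constants so that the parts divided
  by \<open>b\<close> vanish at \<open>\<i>\<close> and those divided by \<open>b\<^sup>-\<^sup>1\<close> at \<open>-\<i>\<close>.\<close>
definition N_plus_mat :: "complex \<Rightarrow> complex \<Rightarrow> complex \<Rightarrow> complex \<Rightarrow> complex^2^2" where
  "N_plus_mat K S P z = (let c = \<i> * K + S; r = (z - \<i>) / (z + \<i>); q = 1 / (z + \<i>) in
     mat2 (8*\<i>*P + 4*\<i>*c) (-12*\<i>*P - 6*\<i>*c)
          (4*\<i>*P*r + 4*c*q + 2*\<i>*K*q - 4*\<i>*S) (-8*\<i>*P*r - 4*\<i>*c - 8*c*q))"

definition N_minus_mat :: "complex \<Rightarrow> complex \<Rightarrow> complex \<Rightarrow> complex \<Rightarrow> complex^2^2" where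
  "N_minus_mat K S R z = (let c = \<i> * K + S; r = (z + \<i>) / (z - \<i>); q = 1 / (z - \<i>) in
     mat2 (8*\<i>*R*r + 8*c*q - 4*\<i>*c) (-12*\<i>*R + 6*\<i>*c)
          (8*\<i>*R*r + 8*c*q - 2*\<i>*K*q) (-8*\<i>*R + 4*\<i>*c))"

lemma Lambda_plus_N_plus_mat_add_N_minus_mat_Lambda_minus:
  fixes x e :: real and K S Q R :: complex
  defines "z \<equiv> complex_of_real x"
  assumes E: "exp (\<i> * of_real (e * x)) = 1 + K + S * (z - \<i>) + Q * (z - \<i>)^2"
    and F: "exp (- \<i> * of_real (e * x)) = 1 + K + S * (- z - \<i>) + R * (- z - \<i>)^2"
  shows "Lambda_plus z ** N_plus_mat K S (z * Q) z + N_minus_mat K S (z * R) z ** Lambda_minus z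
    = Gmat e x - Lambda z"
proof -
  define m1 where "m1 = inverse (z - \<i>)"
  define m2 where "m2 = inverse (z + \<i>)"
  have "z - \<i> \<noteq> 0" "z + \<i> \<noteq> 0" by (auto simp: z_def complex_eq_iff)
  then have m: "(z - \<i>) * m1 = 1" "(z + \<i>) * m2 = 1" by (simp_all add: m1_def m2_def)
  have "z^2 + 1 = (z - \<i>) * (z + \<i>)" by (simp add: algebra_simps power2_eq_square)
  then have div: "u / (z - \<i>) = u * m1" "u / (z + \<i>) = u * m2" "u / (z^2 + 1) = u * m1 * m2" for u
    by (simp_all add: m1_def m2_def divide_inverse mult.assoc)
  have b: "inverse (bfun z) = (z + \<i>) * m1" "bfun z = (z - \<i>) * m2"
    by (simp_all add: bfun_def m1_def m2_def divide_inverse mult.commute)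
  have ii: "\<i> * \<i> = -1" by simp
  show ?thesis
    unfolding Gmat_def Let_def E F z_def[symmetric]
    unfolding N_plus_mat_def N_minus_mat_def Lambda_plus_def Lambda_minus_def Lambda_def Let_def
      mat2_mult mat2_add mat2_diff
    unfolding b(1) unfolding b(2) div
    by (rule mat2_eqI; simp only: mat2_nth; use m ii in algebra)
qed

lemma norm_N_plus_mat_le:
  assumes "0 \<le> Im z" and K: "norm K \<le> d" and S: "norm S \<le> d" and P: "norm P \<le> d"
  shows "norm (N_plus_mat K S P z) \<le> 100 * d"
proof -
  define c where "c = \<i> * K + S"
  define r where "r = (z - \<i>) / (z + \<i>)"
  define q where "q = 1 / (z + \<i>)"
  have c: "norm c \<le> 2 * d"
    using norm_triangle_ineq[of "\<i> * K" S] K S by (simp add: c_def norm_mult)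
  have "norm r \<le> 1" "norm q \<le> 1"
    using norm_Cayley_le_1[OF assms(1)] by (simp_all add: r_def q_def)
  then have "norm P * norm r \<le> d" "norm c * norm q \<le> 2 * d" "norm K * norm q \<le> d"
    using P c K by (meson mult_right_le_one_le norm_ge_zero order_trans)+
  with P S c have "norm (8*\<i>*P + 4*\<i>*c) \<le> 8*d + 4*(2*d)"
    and "norm (-12*\<i>*P - 6*\<i>*c) \<le> 12*d + 6*(2*d)"
    and "norm (4*\<i>*P*r + 4*c*q + 2*\<i>*K*q - 4*\<i>*S) \<le> 4*d + 4*(2*d) + 2*d + 4*d"
    and "norm (-8*\<i>*P*r - 4*\<i>*c - 8*c*q) \<le> 8*d + 4*(2*d) + 8*(2*d)"
    by (intro norm_triangle_mono norm_diff_mono; simp add: norm_mult mult.assoc)+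
  moreover have "norm (N_plus_mat K S P z) \<le> norm (N_plus_mat K S P z $ 1 $ 1) + norm (N_plus_mat K S P z $ 1 $ 2)
      + norm (N_plus_mat K S P z $ 2 $ 1) + norm (N_plus_mat K S P z $ 2 $ 2)"
    unfolding N_plus_mat_def Let_def by (rule order_trans[OF norm_mat2_le]) simp
  ultimately show ?thesis
    unfolding N_plus_mat_def Let_def c_def[symmetric] r_def[symmetric] q_def[symmetric] mat2_nth
    using order_trans[OF norm_ge_zero K] by linarith
qed

lemma norm_N_minus_mat_le:
  assumes "Im z \<le> 0" and K: "norm K \<le> d" and S: "norm S \<le> d" and R: "norm R \<le> d"
  shows "norm (N_minus_mat K S R z) \<le> 100 * d"
proof -
  define c where "c = \<i> * K + S"
  define r where "r = (z + \<i>) / (z - \<i>)"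
  define q where "q = 1 / (z - \<i>)"
  have c: "norm c \<le> 2 * d"
    using norm_triangle_ineq[of "\<i> * K" S] K S by (simp add: c_def norm_mult)
  have "norm r \<le> 1" "norm q \<le> 1"
    using norm_Cayley_le_1_lower[OF assms(1)] by (simp_all add: r_def q_def)
  then have "norm R * norm r \<le> d" "norm c * norm q \<le> 2 * d" "norm K * norm q \<le> d"
    using R c K by (meson mult_right_le_one_le norm_ge_zero order_trans)+
  with R c have "norm (8*\<i>*R*r + 8*c*q - 4*\<i>*c) \<le> 8*d + 8*(2*d) + 4*(2*d)"
    and "norm (-12*\<i>*R + 6*\<i>*c) \<le> 12*d + 6*(2*d)"
    and "norm (8*\<i>*R*r + 8*c*q - 2*\<i>*K*q) \<le> 8*d + 8*(2*d) + 2*d"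
    and "norm (-8*\<i>*R + 4*\<i>*c) \<le> 8*d + 4*(2*d)"
    by (intro norm_triangle_mono norm_diff_mono; simp add: norm_mult mult.assoc)+
  moreover have "norm (N_minus_mat K S R z) \<le> norm (N_minus_mat K S R z $ 1 $ 1) + norm (N_minus_mat K S R z $ 1 $ 2)
      + norm (N_minus_mat K S R z $ 2 $ 1) + norm (N_minus_mat K S R z $ 2 $ 2)"
    unfolding N_minus_mat_def Let_def by (rule order_trans[OF norm_mat2_le]) simp
  ultimately show ?thesis
    unfolding N_minus_mat_def Let_def c_def[symmetric] r_def[symmetric] q_def[symmetric] mat2_nth
    using order_trans[OF norm_ge_zero K] by linarith
qed

definition N_plus :: "real \<Rightarrow> complex \<Rightarrow> complex^2^2" where
  "N_plus e z = N_plus_mat (exp (- of_real e) - 1) (\<i> * of_real e * exp (- of_real e))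
     (z * exp_remainder e z) z"

definition N_minus :: "real \<Rightarrow> complex \<Rightarrow> complex^2^2" where
  "N_minus e z = N_minus_mat (exp (- of_real e) - 1) (\<i> * of_real e * exp (- of_real e))
     (z * exp_remainder e (- z)) z"

lemma Lambda_plus_N_plus_add_N_minus_Lambda_minus:
  "Lambda_plus (of_real x) ** N_plus e (of_real x) + N_minus e (of_real x) ** Lambda_minus (of_real x)
     = Gmat e x - Lambda (of_real x)"
  unfolding N_plus_def N_minus_def
proof (rule Lambda_plus_N_plus_mat_add_N_minus_mat_Lambda_minus)
  have "of_real x \<noteq> \<i>" "- of_real x \<noteq> \<i>" by (auto simp: complex_eq_iff)
  from this[THEN exp_second_order_expansion[where e = e]]
  show "exp (\<i> * of_real (e * x)) = 1 + (exp (- of_real e) - 1)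
      + \<i> * of_real e * exp (- of_real e) * (of_real x - \<i>) + exp_remainder e (of_real x) * (of_real x - \<i>)^2"
    and "exp (- \<i> * of_real (e * x)) = 1 + (exp (- of_real e) - 1)
      + \<i> * of_real e * exp (- of_real e) * (- of_real x - \<i>) + exp_remainder e (- of_real x) * (- of_real x - \<i>)^2"
    by (simp_all add: mult_ac)
qed

lemma norm_N_plus_le:
  assumes "0 \<le> e" "0 \<le> Im z" shows "norm (N_plus e z) \<le> 1800 * e"
proof -
  have "norm (N_plus e z) \<le> 100 * (18 * e)"
    unfolding N_plus_def using norm_exp_constants_le[OF assms(1)] assms(1)
    by (intro norm_N_plus_mat_le norm_exp_remainder_le assms) auto
  then show ?thesis by simp
qed

lemma norm_N_minus_le:
  assumes "0 \<le> e" "Im z \<le> 0" shows "norm (N_minus e z) \<le> 1800 * e"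
proof -
  have "norm (z * exp_remainder e (- z)) \<le> 18 * e"
    using norm_exp_remainder_le[of e "- z"] assms by simp
  then have "norm (N_minus e z) \<le> 100 * (18 * e)"
    unfolding N_minus_def using norm_exp_constants_le[OF assms(1)] assms(1)
    by (intro norm_N_minus_mat_le assms) auto
  then show ?thesis by simp
qed

lemma norm_Lambda_plus_inv_le: "Im z \<le> 0 \<Longrightarrow> norm (Lambda_plus_inv z) \<le> 2"
  using norm_mat2_le[of "inverse (bfun z)" 0 0 1] norm_Cayley_le_1_lower(1)[of z]
  by (simp add: Lambda_plus_inv_def bfun_def inverse_divide)

lemma norm_Lambda_minus_inv_le: "0 \<le> Im z \<Longrightarrow> norm (Lambda_minus_inv z) \<le> 2"
  using norm_mat2_le[of 1 0 0 "bfun z"] norm_Cayley_le_1(1)[of z]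
  by (simp add: Lambda_minus_inv_def bfun_def)

lemma invertible_left_factor:
  assumes "0 \<le> e" "e \<le> 1/10^6" "Im z \<le> 0"
  shows "invertible (mat 1 + N_minus e z ** Lambda_plus_inv z)
    \<and> norm (matrix_inv (mat 1 + N_minus e z ** Lambda_plus_inv z)) \<le> 2 * norm (mat 1 :: complex^2^2)"
proof (rule invertible_mat_1_plus_small)
  have "norm (N_minus e z ** Lambda_plus_inv z) \<le> 8 * norm (N_minus e z) * norm (Lambda_plus_inv z)"
    using norm_matrix_mult_le[of "N_minus e z" "Lambda_plus_inv z"] by simp
  also have "\<dots> \<le> 8 * (1800 * e) * 2"
    using norm_N_minus_le[OF assms(1,3)] norm_Lambda_plus_inv_le[OF assms(3)] assms(1)
    by (intro mult_mono) auto
  finally show "16 * norm (N_minus e z ** Lambda_plus_inv z) \<le> 1" using assms(2) by simp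
qed

lemma invertible_right_factor:
  assumes "0 \<le> e" "e \<le> 1/10^6" "0 \<le> Im z"
  shows "invertible (mat 1 + Lambda_minus_inv z ** N_plus e z)
    \<and> norm (matrix_inv (mat 1 + Lambda_minus_inv z ** N_plus e z)) \<le> 2 * norm (mat 1 :: complex^2^2)"
proof (rule invertible_mat_1_plus_small)
  have "norm (Lambda_minus_inv z ** N_plus e z) \<le> 8 * norm (Lambda_minus_inv z) * norm (N_plus e z)"
    using norm_matrix_mult_le[of "Lambda_minus_inv z" "N_plus e z"] by simp
  also have "\<dots> \<le> 8 * 2 * (1800 * e)"
    using norm_N_plus_le[OF assms(1,3)] norm_Lambda_minus_inv_le[OF assms(3)]
    by (intro mult_mono) auto
  finally show "16 * norm (Lambda_minus_inv z ** N_plus e z) \<le> 1" using assms(2) by simp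
qed

lemma norm_factorization_error_le:
  assumes "0 \<le> e"
  shows "norm (Gmat e x - (mat 1 + N_minus e (of_real x) ** Lambda_plus_inv (of_real x))
      ** Lambda (of_real x) ** (mat 1 + Lambda_minus_inv (of_real x) ** N_plus e (of_real x)))
    \<le> 3 * 10^7 * e^2"
proof -
  define z where "z = complex_of_real x"
  have "z - \<i> \<noteq> 0" "z + \<i> \<noteq> 0" by (auto simp: z_def complex_eq_iff)
  then have "bfun z \<noteq> 0" by (simp add: bfun_def)
  then have "Lambda_plus_inv z ** Lambda z = Lambda_minus z" "Lambda z ** Lambda_minus_inv z = Lambda_plus z"
    "Lambda_minus z ** Lambda_minus_inv z = mat 1"
    by (simp_all add: Lambda_plus_inv_def Lambda_def Lambda_minus_def Lambda_minus_inv_def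
        Lambda_plus_def mat2_mult mat_1_eq_mat2)
  from factorization_defect[OF this Lambda_plus_N_plus_add_N_minus_Lambda_minus[of x e, folded z_def]]
  have "norm (Gmat e x - (mat 1 + N_minus e z ** Lambda_plus_inv z) ** Lambda z
      ** (mat 1 + Lambda_minus_inv z ** N_plus e z)) = norm (N_minus e z ** N_plus e z)"
    by simp
  also have "\<dots> \<le> 8 * norm (N_minus e z) * norm (N_plus e z)"
    using norm_matrix_mult_le[of "N_minus e z" "N_plus e z"] by simp
  also have "\<dots> \<le> 8 * (1800 * e) * (1800 * e)"
    using norm_N_minus_le[OF assms, of z] norm_N_plus_le[OF assms, of z] assms
    by (intro mult_mono) (auto simp: z_def)
  also have "\<dots> \<le> 3 * 10^7 * e^2" by (simp add: power2_eq_square)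
  finally show ?thesis by (simp add: z_def)
qed

lemma good_on_N_plus:
  assumes "0 \<le> e" shows "good_on {z. 0 < Im z} (N_plus e)"
proof -
  have "z + \<i> \<noteq> 0" if "0 \<le> Im z" for z using that by (auto simp: complex_eq_iff)
  then show ?thesis
    using norm_N_plus_le[OF assms, unfolded N_plus_def N_plus_mat_def Let_def]
    unfolding N_plus_def[abs_def] N_plus_mat_def Let_def
    by (intro good_onI_mat2) (auto simp: closure_upper_half_plane intro!: continuous_intros holomorphic_intros)
qed

lemma good_on_N_minus:
  assumes "0 \<le> e" shows "good_on {z. Im z < 0} (N_minus e)"
proof -
  have "z - \<i> \<noteq> 0" if "Im z \<le> 0" for z using that by (auto simp: complex_eq_iff)
  then show ?thesis
    using norm_N_minus_le[OF assms, unfolded N_minus_def N_minus_mat_def Let_def]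
    unfolding N_minus_def[abs_def] N_minus_mat_def Let_def
    by (intro good_onI_mat2) (auto simp: closure_lower_half_plane intro!: continuous_intros holomorphic_intros)
qed

theorem mainTheorem3:
  shows "\<exists>(Np :: real \<Rightarrow> complex \<Rightarrow> complex^2^2) (Nm :: real \<Rightarrow> complex \<Rightarrow> complex^2^2) C.
    (\<forall>\<epsilon>\<in>{0<..1}.
       good_on Pi_plus (Np \<epsilon>) \<and> good_on Pi_minus (Nm \<epsilon>) \<and>
       (\<forall>x::real. Lambda_plus (of_real x) ** Np \<epsilon> (of_real x) + Nm \<epsilon> (of_real x) ** Lambda_minus (of_real x)
                   = Gmat \<epsilon> x - Lambda (of_real x)) \<and>
       (\<forall>z\<in>closure Pi_plus. norm (Np \<epsilon> z) \<le> C * \<epsilon>) \<and>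
       (\<forall>z\<in>closure Pi_minus. norm (Nm \<epsilon> z) \<le> C * \<epsilon>) \<and>
       (\<forall>x::real. norm (Gmat \<epsilon> x -
            (mat 1 + Nm \<epsilon> (of_real x) ** Lambda_plus_inv (of_real x)) ** Lambda (of_real x) **
            (mat 1 + Lambda_minus_inv (of_real x) ** Np \<epsilon> (of_real x))) \<le> C * \<epsilon>^2)) \<and>
    (\<exists>\<epsilon>0>0. \<forall>\<epsilon>\<in>{0<..min \<epsilon>0 1}.
       (\<exists>M. \<forall>z\<in>closure Pi_minus.
          invertible (mat 1 + Nm \<epsilon> z ** Lambda_plus_inv z) \<and>
          norm (matrix_inv (mat 1 + Nm \<epsilon> z ** Lambda_plus_inv z)) \<le> M) \<and>
       (\<exists>M. \<forall>z\<in>closure Pi_plus.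
          invertible (mat 1 + Lambda_minus_inv z ** Np \<epsilon> z) \<and>
          norm (matrix_inv (mat 1 + Lambda_minus_inv z ** Np \<epsilon> z)) \<le> M))"
proof (rule exI[of _ N_plus], rule exI[of _ N_minus], rule exI[of _ "3 * 10^7"], intro conjI ballI allI)
  fix e :: real assume "e \<in> {0<..1}"
  then have e: "0 \<le> e" by simp
  show "good_on Pi_plus (N_plus e)" by (rule good_on_N_plus[OF e])
  show "good_on Pi_minus (N_minus e)" by (rule good_on_N_minus[OF e])
  fix x :: real
  show "Lambda_plus (of_real x) ** N_plus e (of_real x) + N_minus e (of_real x) ** Lambda_minus (of_real x)
      = Gmat e x - Lambda (of_real x)"
    by (rule Lambda_plus_N_plus_add_N_minus_Lambda_minus)
  show "norm (Gmat e x - (mat 1 + N_minus e (of_real x) ** Lambda_plus_inv (of_real x))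
      ** Lambda (of_real x) ** (mat 1 + Lambda_minus_inv (of_real x) ** N_plus e (of_real x)))
    \<le> 3 * 10^7 * e^2"
    by (rule norm_factorization_error_le[OF e])
next
  fix e z assume "e \<in> {0<..1::real}" "z \<in> closure Pi_plus"
  then show "norm (N_plus e z) \<le> 3 * 10^7 * e"
    using norm_N_plus_le[of e z] by (auto simp: closure_upper_half_plane)
next
  fix e z assume "e \<in> {0<..1::real}" "z \<in> closure Pi_minus"
  then show "norm (N_minus e z) \<le> 3 * 10^7 * e"
    using norm_N_minus_le[of e z] by (auto simp: closure_lower_half_plane)
qed (rule exI[of _ "1/10^6"], intro conjI ballI exI[of _ "2 * norm (mat 1 :: complex^2^2)"],
     auto simp: closure_upper_half_plane closure_lower_half_plane
       intro: invertible_left_factor[THEN conjunct1] invertible_left_factor[THEN conjunct2]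
         invertible_right_factor[THEN conjunct1] invertible_right_factor[THEN conjunct2])

end
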